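(* Let $G\in\mathfrak{R}H^\infty_{m\times p}$, $K\in\mathfrak{R}H^\infty_{m\times q}$ and $F\in\mathfrak{R}H^\infty_{m\times r}$ be given by $G(z)=D_1+zC(I_n-zA)^{-1}B_1$, $K(z)=D_2+zC(I_n-zA)^{-1}B_2$, $F(z)=D_3+zC(I_n-zA)^{-1}B_3$, where $[G\ K]=[D_1\ D_2]+zC(I_n-zA)^{-1}[B_1\ B_2]$ is a minimal realization with $A$ stable $n\times n$, $T_GT_G^*-T_KT_K^*\ge0$, and $P_3+P_2-P_1\ge0$, with $P_j$ the controllability Gramian of $\{A,B_j\}$. If \[ T_GT_G^*-T_KT_K^*-T_FT_F^*=W_{obs}(P_3+P_2-P_1)W_{obs}^*, \] then, with $\Lambda(z)=C(I_n-zA)^{-1}(P_3+P_2-P_1)^{1/2}$, \[ \lambda\bar z\,\Lambda(\lambda)\Lambda(z)^*+G(\lambda)G(z)^*=\Lambda(\lambda)\Lambda(z)^*+K(\lambda)K(z)^*+F(\lambda)F(z)^*\qquad(z,\lambda\in\mathbb{D}). \]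
   Context: $\mathbb{D}$ is the open unit disc; a stable matrix has all eigenvalues in $\mathbb{D}$. $\mathfrak{R}H^\infty_{k\times l}$: $k\times l$ rational matrix functions without poles in the closed unit disc. Minimal realization: observable and controllable. $\ell^2_+(\mathbb{C}^k)$: square summable $\mathbb{C}^k$-valued sequences indexed by $j\ge0$; $T_\Omega$: block lower triangular Toeplitz operator with $(i,j)$ block $\Omega_{i-j}$, $\Omega_j$ the Taylor coefficients. $W_{obs}=\operatorname{col}(CA^j)_{j\ge0}$, $P_j=\sum_{\nu\ge0}A^\nu B_jB_j^*(A^* )^\nu$. *)

theory Defs
  imports "HOL-Analysis.Analysis"
begin

text \<open>Matrices are complex matrices with type-indexed dimensions:
  a k x l matrix has type complex^'l^'k (rows indexed by 'k).\<close>

definition cadj :: "complex^'l^'k \<Rightarrow> complex^'k^'l" where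
  "cadj M = (\<chi> i j. cnj (M $ j $ i))"

definition mscale :: "complex \<Rightarrow> complex^'l^'k \<Rightarrow> complex^'l^'k" where
  "mscale c M = (\<chi> i j. c * M $ i $ j)"

primrec mpow :: "complex^'n^'n \<Rightarrow> nat \<Rightarrow> complex^'n^'n" where
  "mpow A 0 = mat 1"
| "mpow A (Suc k) = A ** mpow A k"

definition cinner :: "complex^'n \<Rightarrow> complex^'n \<Rightarrow> complex" where
  "cinner u v = (\<Sum>a\<in>UNIV. cnj (u $ a) * v $ a)"

definition stable :: "complex^'n^'n \<Rightarrow> bool" where
  "stable A \<longleftrightarrow> (\<forall>\<mu> x. x \<noteq> 0 \<and> A *v x = (\<chi> i. \<mu> * x $ i) \<longrightarrow> cmod \<mu> < 1)"

definition observable :: "complex^'n^'m \<Rightarrow> complex^'n^'n \<Rightarrow> bool" where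
  "observable C A \<longleftrightarrow> (\<forall>x. (\<forall>k. (C ** mpow A k) *v x = 0) \<longrightarrow> x = 0)"

text \<open>Controllability of (A,B): the columns of A^k B (k >= 0) span C^n, i.e. the
  orthogonal complement of their span is trivial.\<close>
definition controllable :: "complex^'n^'n \<Rightarrow> complex^'l^'n \<Rightarrow> bool" where
  "controllable A B \<longleftrightarrow> (\<forall>x. (\<forall>k. cadj (mpow A k ** B) *v x = 0) \<longrightarrow> x = 0)"

definition hcat :: "complex^'p^'n \<Rightarrow> complex^'q^'n \<Rightarrow> complex^('p + 'q)^'n" where
  "hcat B1 B2 = (\<chi> i j. case j of Inl a \<Rightarrow> B1 $ i $ a | Inr b \<Rightarrow> B2 $ i $ b)"

definition tf :: "complex^'l^'m \<Rightarrow> complex^'n^'m \<Rightarrow> complex^'n^'n \<Rightarrow> complex^'l^'n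
    \<Rightarrow> complex \<Rightarrow> complex^'l^'m" where
  "tf D C A B z = D + mscale z (C ** matrix_inv (mat 1 - mscale z A) ** B)"

text \<open>Taylor coefficients of D + z C (I - z A)^{-1} B.\<close>
definition tcoeff :: "complex^'l^'m \<Rightarrow> complex^'n^'m \<Rightarrow> complex^'n^'n \<Rightarrow> complex^'l^'n
    \<Rightarrow> nat \<Rightarrow> complex^'l^'m" where
  "tcoeff D C A B k = (if k = 0 then D else C ** mpow A (k - 1) ** B)"

text \<open>Block entries of the block lower triangular Toeplitz operator T_Omega.\<close>
definition toep :: "(nat \<Rightarrow> complex^'l^'m) \<Rightarrow> nat \<Rightarrow> nat \<Rightarrow> complex^'l^'m" where
  "toep \<Omega> i j = (if j \<le> i then \<Omega> (i - j) else 0)"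

text \<open>Block entries of T_Omega T_Omega^*: (i,j) block is sum_k T_{ik} (T_{jk})^*
  (only k <= i contributes).\<close>
definition TTadj :: "(nat \<Rightarrow> complex^'l^'m) \<Rightarrow> nat \<Rightarrow> nat \<Rightarrow> complex^'m^'m" where
  "TTadj \<Omega> i j = (\<Sum>k\<le>i. toep \<Omega> i k ** cadj (toep \<Omega> j k))"

definition gram :: "complex^'n^'n \<Rightarrow> complex^'l^'n \<Rightarrow> complex^'n^'n" where
  "gram A B = (\<Sum>\<nu>. mpow A \<nu> ** B ** cadj B ** cadj (mpow A \<nu>))"

text \<open>Block entries of W_obs P W_obs^*, W_obs = col(C A^j).\<close>
definition Wobs_kernel :: "complex^'n^'m \<Rightarrow> complex^'n^'n \<Rightarrow> complex^'n^'n
    \<Rightarrow> nat \<Rightarrow> nat \<Rightarrow> complex^'m^'m" where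
  "Wobs_kernel C A P i j = C ** mpow A i ** P ** cadj (C ** mpow A j)"

definition mat_psd :: "complex^'n^'n \<Rightarrow> bool" where
  "mat_psd P \<longleftrightarrow> (\<forall>x. cinner x (P *v x) \<in> \<real> \<and> 0 \<le> Re (cinner x (P *v x)))"

text \<open>Positivity of the bounded operator on l^2_+(C^m) with block matrix M:
  the quadratic form is nonnegative on all finitely supported sequences
  (which are dense, so this is equivalent to operator positivity).\<close>
definition block_psd :: "(nat \<Rightarrow> nat \<Rightarrow> complex^'m^'m) \<Rightarrow> bool" where
  "block_psd M \<longleftrightarrow> (\<forall>N (x :: nat \<Rightarrow> complex^'m).
     (\<Sum>i<N. \<Sum>j<N. cinner (x i) (M i j *v x j)) \<in> \<real> \<and>
     0 \<le> Re (\<Sum>i<N. \<Sum>j<N. cinner (x i) (M i j *v x j)))"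

end

theory Submission
  imports Defs
begin

text \<open>Comparing the block entries of the kernel identity at (0,0), (i+1,0) and (i+1,j+1) and
  cancelling the observability factors C A^i gives the three equations
  D D^* = C P C^*, B D^* = A P C^* and B B^* = A P A^* - P for the combined coefficients, where
  P = P_3 + P_2 - P_1. Multiplying the expansion of G(w) G(z)^* - K(w) K(z)^* - F(w) F(z)^*
  by the resolvents, the Stein equation collapses it to (1 - w conj z) C U P V^* C^* with
  U = (I - wA)^{-1}, V = (I - zA)^{-1}, which is the claimed identity once P = R R.\<close>

lemma cadj_matrix_mult: "cadj (A ** B) = cadj B ** cadj A"
  by (simp add: cadj_def matrix_matrix_mult_def vec_eq_iff mult.commute)

lemma cadj_add: "cadj (A + B) = cadj A + cadj B"
  by (simp add: cadj_def vec_eq_iff)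

lemma cadj_diff: "cadj (A - B) = cadj A - cadj B"
  by (simp add: cadj_def vec_eq_iff)

lemma cadj_cadj [simp]: "cadj (cadj A) = A"
  by (simp add: cadj_def vec_eq_iff)

lemma cadj_zero [simp]: "cadj 0 = 0"
  by (simp add: cadj_def vec_eq_iff)

lemma cadj_mat_1 [simp]: "cadj (mat 1) = mat 1"
  by (simp add: cadj_def vec_eq_iff mat_def)

lemma cadj_mscale: "cadj (mscale c A) = mscale (cnj c) (cadj A)"
  by (simp add: cadj_def mscale_def vec_eq_iff)

lemma mscale_matrix_mult_left: "mscale c A ** B = mscale c (A ** B)"
  by (simp add: mscale_def matrix_matrix_mult_def vec_eq_iff sum_distrib_left mult.assoc)

lemma mscale_matrix_mult_right: "A ** mscale c B = mscale c (A ** B)"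
  by (simp add: mscale_def matrix_matrix_mult_def vec_eq_iff sum_distrib_left mult_ac)

lemma mscale_add: "mscale c (A + B) = mscale c A + mscale c B"
  by (simp add: mscale_def vec_eq_iff algebra_simps)

lemma mscale_diff: "mscale c (A - B) = mscale c A - mscale c B"
  by (simp add: mscale_def vec_eq_iff algebra_simps)

lemma mscale_mscale: "mscale c (mscale d A) = mscale (c * d) A"
  by (simp add: mscale_def vec_eq_iff algebra_simps)

lemma matrix_add_rdistrib: "(A + B) ** C = A ** C + B ** C"
  by (simp add: matrix_matrix_mult_def vec_eq_iff sum.distrib algebra_simps)

lemma matrix_diff_rdistrib: "(A - B) ** C = A ** C - B ** (C :: 'a::ring_1^_^_)"
  by (simp add: matrix_matrix_mult_def vec_eq_iff sum_subtractf algebra_simps)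

lemma matrix_diff_ldistrib: "C ** (A - B) = C ** A - C ** (B :: 'a::ring_1^_^_)"
  by (simp add: matrix_matrix_mult_def vec_eq_iff sum_subtractf algebra_simps)

lemma mpow_Suc_right: "mpow A (Suc k) = mpow A k ** A"
  by (induction k) (simp_all add: matrix_mul_assoc)

lemma TTadj_0_0: "TTadj \<Omega> 0 0 = \<Omega> 0 ** cadj (\<Omega> 0)"
  by (simp add: TTadj_def toep_def)

lemma TTadj_Suc_0: "TTadj \<Omega> (Suc i) 0 = \<Omega> (Suc i) ** cadj (\<Omega> 0)"
  unfolding TTadj_def by (subst sum.atMost_Suc_shift) (simp add: toep_def)

lemma TTadj_Suc_Suc:
  "TTadj \<Omega> (Suc i) (Suc j) = \<Omega> (Suc i) ** cadj (\<Omega> (Suc j)) + TTadj \<Omega> i j"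
  unfolding TTadj_def by (subst sum.atMost_Suc_shift) (auto simp: toep_def intro!: sum.cong)

lemma observable_cancel_left:
  assumes "observable C A" and "\<And>i. C ** mpow A i ** N = 0"
  shows "N = 0"
proof -
  have "N *v y = 0 *v y" for y
  proof -
    have "\<forall>k. (C ** mpow A k) *v (N *v y) = 0"
      using assms(2) by (simp add: matrix_vector_mul_assoc)
    then show ?thesis
      using assms(1) unfolding observable_def by simp
  qed
  then show ?thesis
    using matrix_eq by blast
qed

lemma observable_cancel_both:
  assumes "observable C A" and "\<And>i j. C ** mpow A i ** M ** cadj (C ** mpow A j) = 0"
  shows "M = 0"
proof -
  have "M ** cadj (C ** mpow A j) = 0" for j
    using observable_cancel_left[OF assms(1), of "M ** cadj (C ** mpow A j)"] assms(2)
    by (simp add: matrix_mul_assoc)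
  then have "C ** mpow A j ** cadj M = 0" for j
    by (metis cadj_matrix_mult cadj_cadj cadj_zero)
  then have "cadj M = 0"
    using observable_cancel_left[OF assms(1)] by blast
  then show ?thesis
    by (metis cadj_cadj cadj_zero)
qed

lemma stable_resolvent_inverse:
  fixes A :: "complex^'n^'n"
  assumes "stable A" and "cmod z < 1"
  shows "matrix_inv (mat 1 - mscale z A) ** (mat 1 - mscale z A) = mat 1"
proof -
  let ?M = "mat 1 - mscale z A"
  have "x = 0" if "?M *v x = 0" for x
  proof (rule ccontr)
    assume "x \<noteq> 0"
    have "mscale z A *v x = (\<chi> i. z * (A *v x) $ i)"
      by (simp add: mscale_def matrix_vector_mult_def vec_eq_iff sum_distrib_left mult.assoc)
    then have "x $ i = z * (A *v x) $ i" for i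
      using arg_cong[OF that, of "\<lambda>v. v $ i"] by (simp add: matrix_vector_mult_diff_rdistrib)
    moreover from this \<open>x \<noteq> 0\<close> have "z \<noteq> 0"
      by (auto simp: vec_eq_iff)
    ultimately have "A *v x = (\<chi> i. (1 / z) * x $ i)"
      by (simp add: vec_eq_iff)
    then have "cmod (1 / z) < 1"
      using assms(1) \<open>x \<noteq> 0\<close> unfolding stable_def by blast
    with assms(2) \<open>z \<noteq> 0\<close> show False
      by (simp add: norm_divide)
  qed
  then obtain L where "L ** ?M = mat 1"
    using matrix_left_invertible_ker by blast
  then have "?M ** L = mat 1 \<and> L ** ?M = mat 1"
    using matrix_left_right_inverse by blast
  then have "?M ** matrix_inv ?M = mat 1 \<and> matrix_inv ?M ** ?M = mat 1"
    unfolding matrix_inv_def by (rule someI)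
  then show ?thesis
    by blast
qed

locale kernel_identity =
  fixes A :: "complex^'n^'n" and C :: "complex^'n^'m" and P :: "complex^'n^'n"
    and B1 :: "complex^'p^'n" and B2 :: "complex^'q^'n" and B3 :: "complex^'r^'n"
    and D1 :: "complex^'p^'m" and D2 :: "complex^'q^'m" and D3 :: "complex^'r^'m"
  assumes observable: "observable C A"
    and kernel_eq: "\<And>i j. TTadj (tcoeff D1 C A B1) i j - TTadj (tcoeff D2 C A B2) i j
                         - TTadj (tcoeff D3 C A B3) i j = Wobs_kernel C A P i j"
begin

lemma feedthrough_eq: "D1 ** cadj D1 - D2 ** cadj D2 - D3 ** cadj D3 = C ** P ** cadj C"
  using kernel_eq[of 0 0] by (simp add: TTadj_0_0 tcoeff_def Wobs_kernel_def)

lemma cross_eq: "B1 ** cadj D1 - B2 ** cadj D2 - B3 ** cadj D3 = A ** P ** cadj C"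
proof -
  have "C ** mpow A i ** (B1 ** cadj D1 - B2 ** cadj D2 - B3 ** cadj D3 - A ** P ** cadj C) = 0"
    for i
    using kernel_eq[of "Suc i" 0]
    by (simp add: TTadj_Suc_0 tcoeff_def Wobs_kernel_def matrix_diff_ldistrib matrix_mul_assoc
        mpow_Suc_right del: mpow.simps(2))
  then show ?thesis
    using observable_cancel_left[OF observable] by fastforce
qed

lemma Stein_eq: "B1 ** cadj B1 - B2 ** cadj B2 - B3 ** cadj B3 = A ** P ** cadj A - P"
proof -
  let ?Y = "B1 ** cadj B1 - B2 ** cadj B2 - B3 ** cadj B3"
  have "C ** mpow A i ** (?Y - (A ** P ** cadj A - P)) ** cadj (C ** mpow A j) = 0" for i j
  proof -
    \<comment> \<open>the (i+1,j+1) entry minus the (i,j) entry isolates the single term with k = 0\<close>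
    have "tcoeff D1 C A B1 (Suc i) ** cadj (tcoeff D1 C A B1 (Suc j))
        - tcoeff D2 C A B2 (Suc i) ** cadj (tcoeff D2 C A B2 (Suc j))
        - tcoeff D3 C A B3 (Suc i) ** cadj (tcoeff D3 C A B3 (Suc j))
        = Wobs_kernel C A P (Suc i) (Suc j) - Wobs_kernel C A P i j"
      using kernel_eq[of "Suc i" "Suc j"] kernel_eq[of i j]
      unfolding TTadj_Suc_Suc by (simp add: algebra_simps)
    then show ?thesis
      by (simp add: tcoeff_def Wobs_kernel_def matrix_diff_ldistrib matrix_diff_rdistrib
          matrix_mul_assoc mpow_Suc_right cadj_matrix_mult del: mpow.simps(2))
  qed
  then show ?thesis
    using observable_cancel_both[OF observable] by fastforce
qed

end

lemma tf_kernel_expand: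
  "tf D C A B w ** cadj (tf D C A B z)
     = D ** cadj D
     + mscale (cnj z) (D ** cadj B ** cadj (matrix_inv (mat 1 - mscale z A)) ** cadj C)
     + mscale w (C ** matrix_inv (mat 1 - mscale w A) ** B ** cadj D)
     + mscale (w * cnj z) (C ** matrix_inv (mat 1 - mscale w A) ** B ** cadj B
         ** cadj (matrix_inv (mat 1 - mscale z A)) ** cadj C)"
  unfolding tf_def
  by (simp add: cadj_add cadj_mscale cadj_matrix_mult matrix_add_ldistrib matrix_add_rdistrib
      mscale_matrix_mult_left mscale_matrix_mult_right mscale_mscale mscale_add matrix_mul_assoc
      algebra_simps)

lemma resolvent_Stein_identity:
  fixes A P U V :: "complex^'n^'n"
  assumes U: "U ** (mat 1 - mscale w A) = mat 1" and V: "V ** (mat 1 - mscale z A) = mat 1"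
  shows "P + mscale (cnj z) (P ** cadj A ** cadj V) + mscale w (U ** A ** P)
           + mscale (w * cnj z) (U ** (A ** P ** cadj A - P) ** cadj V)
         = U ** P ** cadj V - mscale (w * cnj z) (U ** P ** cadj V)"
proof -
  have UA: "mscale w (U ** A) = U - mat 1"
    using U by (simp add: matrix_diff_ldistrib mscale_matrix_mult_right algebra_simps)
  have "mscale z (V ** A) = V - mat 1"
    using V by (simp add: matrix_diff_ldistrib mscale_matrix_mult_right algebra_simps)
  from arg_cong[OF this, of cadj]
  have AV: "mscale (cnj z) (cadj A ** cadj V) = cadj V - mat 1"
    by (simp add: cadj_mscale cadj_matrix_mult cadj_diff)
  have left: "mscale (cnj z) (P ** cadj A ** cadj V) = P ** cadj V - P"
    using arg_cong[OF AV, of "\<lambda>M. P ** M"]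
    by (simp add: mscale_matrix_mult_right matrix_mul_assoc matrix_diff_ldistrib)
  have right: "mscale w (U ** A ** P) = U ** P - P"
    using arg_cong[OF UA, of "\<lambda>M. M ** P"]
    by (simp add: mscale_matrix_mult_left matrix_mul_assoc matrix_diff_rdistrib)
  have "(U - mat 1) ** P ** (cadj V - mat 1)
      = mscale w (U ** A) ** P ** mscale (cnj z) (cadj A ** cadj V)"
    using UA AV by simp
  also have "\<dots> = mscale (w * cnj z) (U ** A ** P ** cadj A ** cadj V)"
    by (simp add: mscale_matrix_mult_left mscale_matrix_mult_right mscale_mscale
        matrix_mul_assoc mult.commute)
  finally have "mscale (w * cnj z) (U ** (A ** P ** cadj A - P) ** cadj V)
      = (U - mat 1) ** P ** (cadj V - mat 1) - mscale (w * cnj z) (U ** P ** cadj V)"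
    by (simp add: matrix_diff_ldistrib matrix_diff_rdistrib mscale_diff matrix_mul_assoc)
  then show ?thesis
    unfolding left right
    by (simp add: matrix_diff_ldistrib matrix_diff_rdistrib matrix_mul_assoc algebra_simps)
qed

lemma (in kernel_identity) tf_kernel_difference:
  assumes "cadj P = P"
    and U: "matrix_inv (mat 1 - mscale w A) ** (mat 1 - mscale w A) = mat 1"
    and V: "matrix_inv (mat 1 - mscale z A) ** (mat 1 - mscale z A) = mat 1"
  defines "L \<equiv> C ** matrix_inv (mat 1 - mscale w A) ** P
                 ** cadj (matrix_inv (mat 1 - mscale z A)) ** cadj C"
  shows "tf D1 C A B1 w ** cadj (tf D1 C A B1 z) - tf D2 C A B2 w ** cadj (tf D2 C A B2 z)
           - tf D3 C A B3 w ** cadj (tf D3 C A B3 z) = L - mscale (w * cnj z) L"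
proof -
  let ?U = "matrix_inv (mat 1 - mscale w A)" and ?V = "matrix_inv (mat 1 - mscale z A)"
  have "tf D1 C A B1 w ** cadj (tf D1 C A B1 z) - tf D2 C A B2 w ** cadj (tf D2 C A B2 z)
          - tf D3 C A B3 w ** cadj (tf D3 C A B3 z)
      = (D1 ** cadj D1 - D2 ** cadj D2 - D3 ** cadj D3)
        + mscale (cnj z) (cadj (B1 ** cadj D1 - B2 ** cadj D2 - B3 ** cadj D3) ** cadj ?V ** cadj C)
        + mscale w (C ** ?U ** (B1 ** cadj D1 - B2 ** cadj D2 - B3 ** cadj D3))
        + mscale (w * cnj z)
            (C ** ?U ** (B1 ** cadj B1 - B2 ** cadj B2 - B3 ** cadj B3) ** cadj ?V ** cadj C)"
    unfolding tf_kernel_expand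
    by (simp add: cadj_diff cadj_add cadj_matrix_mult matrix_diff_ldistrib matrix_diff_rdistrib
        mscale_diff matrix_add_ldistrib matrix_add_rdistrib mscale_add matrix_mul_assoc
        algebra_simps)
  also have "\<dots> = C ** (P + mscale (cnj z) (P ** cadj A ** cadj ?V) + mscale w (?U ** A ** P)
           + mscale (w * cnj z) (?U ** (A ** P ** cadj A - P) ** cadj ?V)) ** cadj C"
    unfolding feedthrough_eq cross_eq Stein_eq
    by (simp add: assms(1) cadj_matrix_mult matrix_add_ldistrib matrix_add_rdistrib
        mscale_matrix_mult_left mscale_matrix_mult_right matrix_mul_assoc)
  also have "\<dots> = L - mscale (w * cnj z) L"
    unfolding resolvent_Stein_identity[OF U V] L_def
    by (simp add: matrix_diff_ldistrib matrix_diff_rdistrib mscale_matrix_mult_left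
        mscale_matrix_mult_right matrix_mul_assoc)
  finally show ?thesis .
qed

theorem lemma4p1:
  fixes A :: "complex^'n^'n" and C :: "complex^'n^'m"
    and B1 :: "complex^'p^'n" and B2 :: "complex^'q^'n" and B3 :: "complex^'r^'n"
    and D1 :: "complex^'p^'m" and D2 :: "complex^'q^'m" and D3 :: "complex^'r^'m"
    and R :: "complex^'n^'n" and z w :: complex
  assumes "stable A"
    and "observable C A"
    and "controllable A (hcat B1 B2)"
    and "block_psd (\<lambda>i j. TTadj (tcoeff D1 C A B1) i j - TTadj (tcoeff D2 C A B2) i j)"
    and "mat_psd (gram A B3 + gram A B2 - gram A B1)"
    and "\<forall>i j. TTadj (tcoeff D1 C A B1) i j - TTadj (tcoeff D2 C A B2) i j
               - TTadj (tcoeff D3 C A B3) i j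
             = Wobs_kernel C A (gram A B3 + gram A B2 - gram A B1) i j"
    and "cadj R = R" and "mat_psd R" and "R ** R = gram A B3 + gram A B2 - gram A B1"
    and "cmod z < 1" and "cmod w < 1"
  shows "mscale (w * cnj z) ((C ** matrix_inv (mat 1 - mscale w A) ** R)
              ** cadj (C ** matrix_inv (mat 1 - mscale z A) ** R))
         + tf D1 C A B1 w ** cadj (tf D1 C A B1 z)
       = (C ** matrix_inv (mat 1 - mscale w A) ** R)
              ** cadj (C ** matrix_inv (mat 1 - mscale z A) ** R)
         + tf D2 C A B2 w ** cadj (tf D2 C A B2 z)
         + tf D3 C A B3 w ** cadj (tf D3 C A B3 z)"
proof -
  define P where "P = gram A B3 + gram A B2 - gram A B1"
  interpret kernel_identity A C P B1 B2 B3 D1 D2 D3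
    using assms(2,6) by unfold_locales (simp_all add: P_def)
  have "cadj P = P"
    using assms(7,9) unfolding P_def by (metis cadj_matrix_mult)
  let ?U = "matrix_inv (mat 1 - mscale w A)" and ?V = "matrix_inv (mat 1 - mscale z A)"
  have "(C ** ?U ** R) ** cadj (C ** ?V ** R) = C ** ?U ** P ** cadj ?V ** cadj C"
    unfolding P_def assms(9)[symmetric] by (simp add: assms(7) cadj_matrix_mult matrix_mul_assoc)
  with tf_kernel_difference[OF \<open>cadj P = P\<close> stable_resolvent_inverse[OF assms(1,11)]
      stable_resolvent_inverse[OF assms(1,10)]]
  show ?thesis
    by (simp add: algebra_simps)
qed

end
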